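(* With the notation of the context, suppose $A=1$. Then every $\alpha$-communal $k$-tuple can be written in exactly one way as a nonnegative integer linear combination $\sum_{i=1}^k c_i\mathbf{x}_i$ with $c_i\in\mathbb{Z}_{\ge 0}$; that is, $\mathbf{x}_1,\dots,\mathbf{x}_k$ freely generate the monoid of $\alpha$-communal $k$-tuples.
   Context: Let $k\ge 2$ and let $\alpha_1,\dots,\alpha_k$ be nonnegative rational numbers such that the sum of any $k-1$ of them is at most $1$ and $\sum_i\alpha_i>1$. A $k$-tuple $[g_1,\dots,g_k]$ of integers is called $\alpha$-communal if $0\le g_i\le \alpha_i\sum_{j=1}^k g_j$ for every $i$. Write $\alpha_i=m_i/n_i$ in lowest terms with $n_i\ge 1$. Set $N=\prod_{i=1}^k n_i$, $A=N(\sum_{i=1}^k\alpha_i-1)$, and $\hat\alpha_i=1-\sum_{j\ne i}\alpha_j$. For each $i$ define $\mathbf{x}_i=\frac{N}{n_i}[\alpha_1,\dots,\alpha_{i-1},\hat\alpha_i,\alpha_{i+1},\dots,\alpha_k]$, i.e. the $k$-tuple whose $j$-th entry is $\frac{N}{n_i}\alpha_j$ for $j\ne i$ and whose $i$-th entry is $\frac{N}{n_i}\hat\alpha_i$. *)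

theory Defs
  imports Complex_Main
begin

text \<open>Tuples are indexed by 0..<k. alpha i is a rational number.\<close>

definition communal :: "nat \<Rightarrow> (nat \<Rightarrow> rat) \<Rightarrow> (nat \<Rightarrow> int) \<Rightarrow> bool" where
  "communal k \<alpha> g \<longleftrightarrow>
     (\<forall>i<k. 0 \<le> g i \<and> of_int (g i) \<le> \<alpha> i * of_int (\<Sum>j<k. g j))"

text \<open>denominator n_i of alpha_i in lowest terms (positive)\<close>
definition den :: "rat \<Rightarrow> int" where
  "den q = snd (quotient_of q)"

definition bigN :: "nat \<Rightarrow> (nat \<Rightarrow> rat) \<Rightarrow> int" where
  "bigN k \<alpha> = (\<Prod>i<k. den (\<alpha> i))"

definition bigA :: "nat \<Rightarrow> (nat \<Rightarrow> rat) \<Rightarrow> rat" where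
  "bigA k \<alpha> = of_int (bigN k \<alpha>) * ((\<Sum>i<k. \<alpha> i) - 1)"

definition alpha_hat :: "nat \<Rightarrow> (nat \<Rightarrow> rat) \<Rightarrow> nat \<Rightarrow> rat" where
  "alpha_hat k \<alpha> i = 1 - (\<Sum>j\<in>{..<k} - {i}. \<alpha> j)"

text \<open>xvec k alpha i j = j-th entry of x_i\<close>
definition xvec :: "nat \<Rightarrow> (nat \<Rightarrow> rat) \<Rightarrow> nat \<Rightarrow> nat \<Rightarrow> rat" where
  "xvec k \<alpha> i j = (of_int (bigN k \<alpha>) / of_int (den (\<alpha> i))) *
      (if j = i then alpha_hat k \<alpha> i else \<alpha> j)"

end

theory Submission
  imports Defs
begin

(* Write n_i for the denominator of alpha_i, N = prod n_i and S = sum alpha_i.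
   The hypothesis A = 1 says N (S - 1) = 1, so the i-th generator is
       x_i = (N / n_i) alpha - (1 / n_i) e_i .
   Hence for any coefficients c the combination g = sum c_i x_i satisfies
       g_j = T alpha_j - c_j / n_j   with weight  T = sum_i c_i N / n_i ,
   and summing over j gives sum_j g_j = T S - T / N = T.  Therefore c is recovered from g by
       c_j = n_j (s alpha_j - g_j),   s = sum_j g_j,
   which gives uniqueness.  Conversely, for an alpha-communal g these numbers c_j are
   nonnegative integers (since n_j alpha_j is an integer) and reproduce g, giving existence.
   Finally every combination with natural coefficients is alpha-communal, because the x_i
   have nonnegative integer entries and g_j <= T alpha_j = alpha_j sum_l g_l. *)

definition numer :: "rat \<Rightarrow> int" where
  "numer q = fst (quotient_of q)"

lemma den_pos: "den q > 0"
  unfolding den_def by (rule quotient_of_denom_pos')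

lemma den_pos_rat: "(of_int (den q) :: rat) > 0"
  using den_pos[of q] by simp

lemma times_den_eq_numer: "q * of_int (den q) = of_int (numer q)"
proof -
  obtain n d where nd: "quotient_of q = (n, d)" by (cases "quotient_of q")
  have "d > 0" using quotient_of_denom_pos[OF nd] .
  moreover have "q = of_int n / of_int d" using quotient_of_div[OF nd] .
  ultimately show ?thesis unfolding den_def numer_def nd by simp
qed

lemma bigN_pos: "bigN k \<alpha> > 0"
  unfolding bigN_def by (rule prod_pos) (simp add: den_pos)

lemma bigN_div_den:
  assumes "i < k"
  shows "(of_int (bigN k \<alpha>) :: rat) / of_int (den (\<alpha> i))
           = of_int (\<Prod>l\<in>{..<k} - {i}. den (\<alpha> l))"
proof -
  have "bigN k \<alpha> = den (\<alpha> i) * (\<Prod>l\<in>{..<k} - {i}. den (\<alpha> l))"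
    unfolding bigN_def using assms by (simp add: prod.remove)
  then show ?thesis using den_pos[of "\<alpha> i"] by simp
qed

text \<open>(N / n_i) alpha_j is an integer for j different from i, since n_j divides N / n_i.\<close>
lemma bigN_div_den_times_alpha_int:
  assumes "i < k" "j < k" "j \<noteq> i"
  shows "(of_int (bigN k \<alpha>) :: rat) / of_int (den (\<alpha> i)) * \<alpha> j \<in> \<int>"
proof -
  have "(\<Prod>l\<in>{..<k} - {i}. den (\<alpha> l)) = den (\<alpha> j) * (\<Prod>l\<in>{..<k} - {i} - {j}. den (\<alpha> l))"
    by (subst prod.remove[of "{..<k} - {i}" j]) (use assms in auto)
  then have "(of_int (bigN k \<alpha>) :: rat) / of_int (den (\<alpha> i)) * \<alpha> j
      = of_int ((\<Prod>l\<in>{..<k} - {i} - {j}. den (\<alpha> l)) * numer (\<alpha> j))"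
    by (simp add: bigN_div_den[OF assms(1)] times_den_eq_numer[symmetric] algebra_simps)
  then show ?thesis by (metis Ints_of_int)
qed

lemma xvec_int:
  assumes "i < k" "j < k"
  shows "xvec k \<alpha> i j \<in> \<int>"
proof (cases "j = i")
  case True
  define P where "P = (of_int (bigN k \<alpha>) :: rat) / of_int (den (\<alpha> i))"
  have "xvec k \<alpha> i j = P - (\<Sum>l\<in>{..<k} - {i}. P * \<alpha> l)"
    unfolding xvec_def alpha_hat_def P_def[symmetric] using True
    by (simp add: sum_distrib_left algebra_simps)
  moreover have "(\<Sum>l\<in>{..<k} - {i}. P * \<alpha> l) \<in> \<int>"
    unfolding P_def by (rule Ints_sum) (use assms bigN_div_den_times_alpha_int in auto)
  moreover have "P \<in> \<int>" unfolding P_def bigN_div_den[OF assms(1)] by (rule Ints_of_int)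
  ultimately show ?thesis by simp
next
  case False
  then show ?thesis
    unfolding xvec_def using bigN_div_den_times_alpha_int[OF assms False] by simp
qed

lemma xvec_nonneg:
  assumes "\<forall>i<k. \<alpha> i \<ge> 0" and "\<forall>i<k. (\<Sum>j\<in>{..<k} - {i}. \<alpha> j) \<le> 1"
    and "i < k" "j < k"
  shows "xvec k \<alpha> i j \<ge> 0"
proof -
  have "alpha_hat k \<alpha> i \<ge> 0" using assms(2,3) unfolding alpha_hat_def by simp
  moreover have "\<alpha> j \<ge> 0" using assms(1,4) by simp
  moreover have "(of_int (bigN k \<alpha>) :: rat) / of_int (den (\<alpha> i)) \<ge> 0"
    using bigN_pos[of k \<alpha>] den_pos[of "\<alpha> i"] by simp
  ultimately show ?thesis
    unfolding xvec_def by (simp add: mult_nonneg_nonneg del: times_divide_eq_left)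
qed

lemma xvec_affine:
  assumes "bigA k \<alpha> = 1" and "i < k"
  shows "xvec k \<alpha> i j = (of_int (bigN k \<alpha>) / of_int (den (\<alpha> i))) * \<alpha> j
           - (if j = i then 1 / of_int (den (\<alpha> i)) else 0)"
proof -
  define N where "N = (of_int (bigN k \<alpha>) :: rat)"
  define S where "S = (\<Sum>l<k. \<alpha> l)"
  define d where "d = (of_int (den (\<alpha> i)) :: rat)"
  have "d > 0" unfolding d_def by (rule den_pos_rat)
  have NS: "N * (S - 1) = 1" using assms(1) unfolding bigA_def N_def S_def .
  have "alpha_hat k \<alpha> i = 1 - (S - \<alpha> i)"
    unfolding alpha_hat_def S_def using assms(2) by (simp add: sum_diff1)
  moreover have "(N / d) * (1 - (S - \<alpha> i)) = (N / d) * \<alpha> i - (N * (S - 1)) / d"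
    using \<open>d > 0\<close> by (simp add: field_simps)
  ultimately show ?thesis unfolding xvec_def N_def[symmetric] d_def[symmetric] NS by simp
qed

definition comb :: "nat \<Rightarrow> (nat \<Rightarrow> rat) \<Rightarrow> (nat \<Rightarrow> rat) \<Rightarrow> nat \<Rightarrow> rat" where
  "comb k \<alpha> c j = (\<Sum>i<k. c i * xvec k \<alpha> i j)"

definition weight :: "nat \<Rightarrow> (nat \<Rightarrow> rat) \<Rightarrow> (nat \<Rightarrow> rat) \<Rightarrow> rat" where
  "weight k \<alpha> c = (\<Sum>i<k. c i * (of_int (bigN k \<alpha>) / of_int (den (\<alpha> i))))"

lemma comb_entry:
  assumes "bigA k \<alpha> = 1" and "j < k"
  shows "comb k \<alpha> c j = weight k \<alpha> c * \<alpha> j - c j / of_int (den (\<alpha> j))"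
proof -
  have "comb k \<alpha> c j = (\<Sum>i<k. c i * (of_int (bigN k \<alpha>) / of_int (den (\<alpha> i))) * \<alpha> j
       - (if j = i then c i / of_int (den (\<alpha> i)) else 0))"
    unfolding comb_def
    by (rule sum.cong) (auto simp: xvec_affine[OF assms(1)] algebra_simps)
  also have "\<dots> = weight k \<alpha> c * \<alpha> j - c j / of_int (den (\<alpha> j))"
    unfolding weight_def using assms(2) by (simp add: sum_subtractf sum_distrib_right)
  finally show ?thesis .
qed

lemma comb_total:
  assumes "bigA k \<alpha> = 1"
  shows "(\<Sum>j<k. comb k \<alpha> c j) = weight k \<alpha> c"
proof -
  define N where "N = (of_int (bigN k \<alpha>) :: rat)"
  define S where "S = (\<Sum>l<k. \<alpha> l)"
  define T where "T = weight k \<alpha> c"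
  have "N > 0" unfolding N_def using bigN_pos[of k \<alpha>] by simp
  have "N * (S - 1) = 1" using assms unfolding bigA_def N_def S_def .
  then have NS: "N * S - 1 = N" by (simp add: algebra_simps)
  have "T = N * (\<Sum>j<k. c j / of_int (den (\<alpha> j)))"
    unfolding T_def weight_def N_def by (simp add: sum_distrib_left field_simps)
  then have cs: "(\<Sum>j<k. c j / of_int (den (\<alpha> j))) = T / N"
    using \<open>N > 0\<close> by (simp add: field_simps)
  have "(\<Sum>j<k. comb k \<alpha> c j) = (\<Sum>j<k. T * \<alpha> j - c j / of_int (den (\<alpha> j)))"
    unfolding T_def by (rule sum.cong) (simp_all add: comb_entry[OF assms])
  also have "\<dots> = T * S - T / N"
    unfolding S_def by (simp add: sum_subtractf sum_distrib_left cs)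
  also have "\<dots> = T * (N * S - 1) / N"
    using \<open>N > 0\<close> by (simp add: field_simps)
  also have "\<dots> = T" using \<open>N > 0\<close> by (simp add: NS)
  finally show ?thesis unfolding T_def .
qed

lemma comb_recover_coeff:
  assumes "bigA k \<alpha> = 1" and "j < k"
  shows "c j = of_int (den (\<alpha> j)) * ((\<Sum>l<k. comb k \<alpha> c l) * \<alpha> j - comb k \<alpha> c j)"
proof -
  have "c j / of_int (den (\<alpha> j)) = (\<Sum>l<k. comb k \<alpha> c l) * \<alpha> j - comb k \<alpha> c j"
    using comb_entry[OF assms, of c] by (simp add: comb_total[OF assms(1)])
  then show ?thesis using den_pos_rat[of "\<alpha> j"] by (simp add: field_simps)
qed

lemma communal_is_comb:
  assumes A: "bigA k \<alpha> = 1" and comm: "communal k \<alpha> g"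
  shows "\<exists>c :: nat \<Rightarrow> nat. (\<forall>i\<ge>k. c i = 0) \<and>
           (\<forall>j<k. of_int (g j) = comb k \<alpha> (\<lambda>i. of_nat (c i)) j)"
proof -
  define s where "s = (\<Sum>j<k. g j)"
  define c where "c j = (if j < k then nat (s * numer (\<alpha> j) - den (\<alpha> j) * g j) else 0)" for j
  define N where "N = (of_int (bigN k \<alpha>) :: rat)"
  have c_val: "(of_nat (c j) :: rat) = of_int (den (\<alpha> j)) * (of_int s * \<alpha> j - of_int (g j))"
    if j: "j < k" for j
  proof -
    have "of_int (g j) \<le> \<alpha> j * of_int s" using comm j unfolding communal_def s_def by auto
    then have "of_int (den (\<alpha> j)) * of_int (g j) \<le> of_int s * (\<alpha> j * of_int (den (\<alpha> j)))"
      using den_pos_rat[of "\<alpha> j"] by (simp add: algebra_simps mult_left_mono)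
    then have "(of_int (den (\<alpha> j) * g j) :: rat) \<le> of_int (s * numer (\<alpha> j))"
      by (simp add: times_den_eq_numer)
    then have "den (\<alpha> j) * g j \<le> s * numer (\<alpha> j)" by linarith
    then have "(of_nat (c j) :: rat) = of_int (s * numer (\<alpha> j) - den (\<alpha> j) * g j)"
      unfolding c_def using j by simp
    then show ?thesis by (simp add: times_den_eq_numer[symmetric] algebra_simps)
  qed
  have "weight k \<alpha> (\<lambda>i. of_nat (c i)) = (\<Sum>i<k. N * (of_int s * \<alpha> i - of_int (g i)))"
    unfolding weight_def N_def
  proof (rule sum.cong)
    fix i assume "i \<in> {..<k}"
    then show "of_nat (c i) * (of_int (bigN k \<alpha>) / of_int (den (\<alpha> i)))
        = of_int (bigN k \<alpha>) * (of_int s * \<alpha> i - of_int (g i))"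
      using c_val[of i] den_pos_rat[of "\<alpha> i"] by simp
  qed simp
  also have "\<dots> = N * (of_int s * (\<Sum>i<k. \<alpha> i) - (\<Sum>i<k. of_int (g i)))"
    by (simp add: sum_distrib_left[symmetric] sum_subtractf)
  also have "\<dots> = of_int s * (N * ((\<Sum>i<k. \<alpha> i) - 1))"
    by (simp add: s_def algebra_simps)
  also have "\<dots> = of_int s" using A unfolding bigA_def N_def by simp
  finally have weight_c: "weight k \<alpha> (\<lambda>i. of_nat (c i)) = of_int s" .
  have "of_int (g j) = comb k \<alpha> (\<lambda>i. of_nat (c i)) j" if "j < k" for j
    using comb_entry[OF A that] weight_c c_val[OF that] den_pos_rat[of "\<alpha> j"] by simp
  moreover have "\<forall>i\<ge>k. c i = 0" unfolding c_def by simp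
  ultimately show ?thesis by blast
qed

lemma comb_coeff_unique:
  assumes A: "bigA k \<alpha> = 1"
    and supp: "\<forall>i\<ge>k. c i = 0" "\<forall>i\<ge>k. c' i = 0"
    and eq: "\<forall>j<k. comb k \<alpha> (\<lambda>i. of_nat (c i)) j = comb k \<alpha> (\<lambda>i. of_nat (c' i)) j"
  shows "c = c'"
proof
  fix j
  show "c j = c' j"
  proof (cases "j < k")
    case True
    have "(\<Sum>l<k. comb k \<alpha> (\<lambda>i. of_nat (c i)) l) = (\<Sum>l<k. comb k \<alpha> (\<lambda>i. of_nat (c' i)) l)"
      using eq by simp
    then have "(of_nat (c j) :: rat) = of_nat (c' j)"
      using comb_recover_coeff[OF A True, of "\<lambda>i. of_nat (c i)"]
        comb_recover_coeff[OF A True, of "\<lambda>i. of_nat (c' i)"] eq True by simp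
    then show ?thesis by simp
  next
    case False
    then show ?thesis using supp by simp
  qed
qed

lemma comb_is_communal:
  assumes A: "bigA k \<alpha> = 1"
    and nonneg: "\<forall>i<k. \<alpha> i \<ge> 0" and small: "\<forall>i<k. (\<Sum>j\<in>{..<k} - {i}. \<alpha> j) \<le> 1"
  shows "\<exists>g. communal k \<alpha> g \<and> (\<forall>j<k. of_int (g j) = comb k \<alpha> (\<lambda>i. of_nat (c i)) j)"
proof -
  let ?X = "comb k \<alpha> (\<lambda>i. of_nat (c i))"
  define g where "g j = \<lfloor>?X j\<rfloor>" for j
  have gX: "of_int (g j) = ?X j" if "j < k" for j
  proof -
    have "?X j \<in> \<int>" unfolding comb_def by (rule Ints_sum) (use that xvec_int in auto)
    then show ?thesis unfolding g_def by (metis Ints_cases floor_of_int)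
  qed
  have total: "(of_int (\<Sum>j<k. g j) :: rat) = weight k \<alpha> (\<lambda>i. of_nat (c i))"
    using gX comb_total[OF A] by simp
  have "communal k \<alpha> g" unfolding communal_def
  proof (intro allI impI conjI)
    fix j assume j: "j < k"
    have "?X j \<ge> 0" unfolding comb_def
      by (rule sum_nonneg) (use xvec_nonneg[OF nonneg small] j in auto)
    then show "0 \<le> g j" using gX[OF j] by simp
    have "of_nat (c j) / of_int (den (\<alpha> j)) \<ge> (0::rat)" using den_pos_rat[of "\<alpha> j"] by simp
    then have "?X j \<le> weight k \<alpha> (\<lambda>i. of_nat (c i)) * \<alpha> j" using comb_entry[OF A j] by simp
    then show "of_int (g j) \<le> \<alpha> j * of_int (\<Sum>j<k. g j)"
      using gX[OF j] total by (simp add: mult.commute)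
  qed
  then show ?thesis using gX by blast
qed

theorem mainTheorem6:
  fixes k :: nat and \<alpha> :: "nat \<Rightarrow> rat"
  assumes "k \<ge> 2"
    and "\<forall>i<k. \<alpha> i \<ge> 0"
    and "\<forall>i<k. (\<Sum>j\<in>{..<k} - {i}. \<alpha> j) \<le> 1"
    and "(\<Sum>i<k. \<alpha> i) > 1"
    and "bigA k \<alpha> = 1"
  shows "(\<forall>g. communal k \<alpha> g \<longrightarrow>
            (\<exists>!c :: nat \<Rightarrow> nat. (\<forall>i\<ge>k. c i = 0) \<and>
                (\<forall>j<k. of_int (g j) = (\<Sum>i<k. of_nat (c i) * xvec k \<alpha> i j))))
       \<and> (\<forall>c :: nat \<Rightarrow> nat. \<exists>g. communal k \<alpha> g \<and>
                (\<forall>j<k. of_int (g j) = (\<Sum>i<k. of_nat (c i) * xvec k \<alpha> i j)))"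
proof (intro conjI allI impI)
  fix g assume "communal k \<alpha> g"
  then obtain c :: "nat \<Rightarrow> nat" where c: "\<forall>i\<ge>k. c i = 0"
      "\<forall>j<k. of_int (g j) = comb k \<alpha> (\<lambda>i. of_nat (c i)) j"
    using communal_is_comb[OF assms(5)] by blast
  show "\<exists>!c :: nat \<Rightarrow> nat. (\<forall>i\<ge>k. c i = 0) \<and>
          (\<forall>j<k. of_int (g j) = (\<Sum>i<k. of_nat (c i) * xvec k \<alpha> i j))"
  proof (rule ex1I[of _ c])
    show "(\<forall>i\<ge>k. c i = 0) \<and> (\<forall>j<k. of_int (g j) = (\<Sum>i<k. of_nat (c i) * xvec k \<alpha> i j))"
      using c unfolding comb_def by simp
  next
    fix c' :: "nat \<Rightarrow> nat"
    assume c': "(\<forall>i\<ge>k. c' i = 0) \<and> (\<forall>j<k. of_int (g j) = (\<Sum>i<k. of_nat (c' i) * xvec k \<alpha> i j))"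
    have "\<forall>j<k. comb k \<alpha> (\<lambda>i. of_nat (c' i)) j = comb k \<alpha> (\<lambda>i. of_nat (c i)) j"
      using c c' unfolding comb_def by simp
    then show "c' = c" using comb_coeff_unique[OF assms(5)] c c' by blast
  qed
next
  fix c :: "nat \<Rightarrow> nat"
  show "\<exists>g. communal k \<alpha> g \<and> (\<forall>j<k. of_int (g j) = (\<Sum>i<k. of_nat (c i) * xvec k \<alpha> i j))"
    using comb_is_communal[OF assms(5,2,3), of c] unfolding comb_def .
qed

end
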